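(* Let $\mathcal M=(S,p)$ be a Markov chain, $s_0\in S$, $A\subseteq S$, and let $f$ be a computable function from $S$ to $\mathbb{R}_{\geq 0}$ such that: (i) either for all $0<\theta<1$, $\mathbf{Pr}_{\mathcal M,s_0}(\mathbf{F}\, f^{-1}([0,\theta]))\leq \theta$, or for all $s\in S$, $\mathbf{Pr}_{\mathcal M,s}(\mathbf{F} A)\leq f(s)$; (ii) for all $0<\theta<1$, the set $\{s\in S \mid f(s)\geq \theta\}\cap Post^*_{\mathcal M}(\{s_0\})$ is finite. Then $\mathcal M$ is divergent with respect to $s_0$ and $A$.
   Context: A Markov chain $\mathcal M=(S,p)$ consists of a countable set $S$ of states and a transition function $p:S\to Dist(S)$ (probability distributions on $S$); write $p(s,s')$ for $p(s)(s')$ and $s\to s'$ when $p(s,s')>0$. $Post^*_{\mathcal M}(X)$ is the set of states reachable (via $\to^*$) from some state of $X$. For $s\in S$, $\mathbf{Pr}_{\mathcal M,s}$ is the probability measure on infinite paths $s=s_0s_1\ldots$ of $\mathcal M$ starting in $s$, and for $X\subseteq S$, $\mathbf{Pr}_{\mathcal M,s}(\mathbf{F}X)$ is the probability that some $s_i$ ($i\geq 0$) lies in $X$. $\mathcal M$ is divergent with respect to $s_0\in S$ and $A\subseteq S$ if there exist two computable functions $f_0,f_1:S\to\mathbb{R}_{\geq 0}$ such that: (a) for all $0<\theta<1$, $\mathbf{Pr}_{\mathcal M,s_0}(\mathbf{F}\, f_0^{-1}([0,\theta]))\leq\theta$; (b) for all $s\in S$, $\mathbf{Pr}_{\mathcal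 M,s}(\mathbf{F}A)\leq f_1(s)$; (c) for all $0<\theta<1$, the set $\{s\mid f_0(s)\geq\theta\wedge f_1(s)\geq\theta\}\cap Post^*_{\mathcal M}(\{s_0\})$ is finite. *)

theory Defs
  imports "HOL-Probability.Probability"
begin

text \<open>A Markov chain over a countable state type 's is given by its transition
  function K :: 's => 's pmf; s -> s' iff s' is in set_pmf (K s).\<close>

fun mc_paths :: "('s \<Rightarrow> 's pmf) \<Rightarrow> 's \<Rightarrow> nat \<Rightarrow> 's list pmf" where
  "mc_paths K s 0 = return_pmf [s]"
| "mc_paths K s (Suc n) = K s \<bind> (\<lambda>t. map_pmf (Cons s) (mc_paths K t n))"

text \<open>Pr_s(F X): probability that a path from s visits X; the measure of the
  increasing union of the cylinder events "X visited within the first n steps".\<close>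
definition reach_prob :: "('s \<Rightarrow> 's pmf) \<Rightarrow> 's \<Rightarrow> 's set \<Rightarrow> real" where
  "reach_prob K s X = (SUP n. measure_pmf.prob (mc_paths K s n) {xs. set xs \<inter> X \<noteq> {}})"

definition post_star :: "('s \<Rightarrow> 's pmf) \<Rightarrow> 's set \<Rightarrow> 's set" where
  "post_star K X = {t. \<exists>s\<in>X. (s, t) \<in> {(x, y). y \<in> set_pmf (K x)}\<^sup>*}"

text \<open>Divergence, relative to an abstract notion of computability of functions S -> R.\<close>
definition divergent ::
  "(('s \<Rightarrow> real) \<Rightarrow> bool) \<Rightarrow> ('s \<Rightarrow> 's pmf) \<Rightarrow> 's \<Rightarrow> 's set \<Rightarrow> bool" where
  "divergent computable K s0 A \<longleftrightarrow>
     (\<exists>f0 f1. computable f0 \<and> computable f1 \<and> (\<forall>s. f0 s \<ge> 0 \<and> f1 s \<ge> 0) \<and>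
       (\<forall>\<theta>. 0 < \<theta> \<and> \<theta> < 1 \<longrightarrow> reach_prob K s0 (f0 -` {0..\<theta>}) \<le> \<theta>) \<and>
       (\<forall>s. reach_prob K s A \<le> f1 s) \<and>
       (\<forall>\<theta>. 0 < \<theta> \<and> \<theta> < 1 \<longrightarrow>
          finite ({s. f0 s \<ge> \<theta> \<and> f1 s \<ge> \<theta>} \<inter> post_star K {s0})))"

end

theory Submission
  imports Defs
begin

text \<open>Whichever half of (i) holds, the other witness can be the constant 1: its
  sublevel sets \<open>[0, \<theta>]\<close> for \<open>\<theta> < 1\<close> are empty, hence reached with probability 0,
  and 1 bounds every reachability probability. Since \<open>1 \<ge> \<theta>\<close> holds for \<open>\<theta> < 1\<close>,
  the finiteness condition of divergence is then exactly (ii).\<close>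

lemma reach_prob_le_1: "reach_prob K s X \<le> 1"
  unfolding reach_prob_def
  by (rule cSUP_least) (auto simp: measure_pmf.prob_le_1)

lemma reach_prob_empty [simp]: "reach_prob K s {} = 0"
  unfolding reach_prob_def by simp

lemma divergent_if_level_sets_unlikely:
  assumes "computable f" "computable (\<lambda>_. 1)" "\<And>s. f s \<ge> 0"
    and "\<And>\<theta>. 0 < \<theta> \<Longrightarrow> \<theta> < 1 \<Longrightarrow> reach_prob K s0 (f -` {0..\<theta>}) \<le> \<theta>"
    and "\<And>\<theta>. 0 < \<theta> \<Longrightarrow> \<theta> < 1 \<Longrightarrow> finite ({s. f s \<ge> \<theta>} \<inter> post_star K {s0})"
  shows "divergent computable K s0 A"
  unfolding divergent_def
proof (intro exI conjI allI impI)
  show "reach_prob K s A \<le> 1" for s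
    by (rule reach_prob_le_1)
  show "finite ({s. f s \<ge> \<theta> \<and> 1 \<ge> \<theta>} \<inter> post_star K {s0})" if "0 < \<theta> \<and> \<theta> < 1" for \<theta>
    using assms(5) that by (simp add: less_imp_le)
qed (use assms in auto)

lemma divergent_if_bounds_reach_prob:
  assumes "computable (\<lambda>_. 1)" "computable f" "\<And>s. f s \<ge> 0"
    and "\<And>s. reach_prob K s A \<le> f s"
    and "\<And>\<theta>. 0 < \<theta> \<Longrightarrow> \<theta> < 1 \<Longrightarrow> finite ({s. f s \<ge> \<theta>} \<inter> post_star K {s0})"
  shows "divergent computable K s0 A"
  unfolding divergent_def
proof (intro exI conjI allI impI)
  fix \<theta> :: real
  assume \<theta>: "0 < \<theta> \<and> \<theta> < 1"
  then have "(\<lambda>_::'a. 1::real) -` {0..\<theta>} = {}"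
    by auto
  then show "reach_prob K s0 ((\<lambda>_. 1) -` {0..\<theta>}) \<le> \<theta>"
    using \<theta> by simp
  show "finite ({s. 1 \<ge> \<theta> \<and> f s \<ge> \<theta>} \<inter> post_star K {s0})"
    using assms(5) \<theta> by (simp add: less_imp_le)
qed (use assms in auto)

theorem proposition1:
  fixes computable :: "('s::countable \<Rightarrow> real) \<Rightarrow> bool"
    and K :: "'s \<Rightarrow> 's pmf" and s0 :: 's and A :: "'s set" and f :: "'s \<Rightarrow> real"
  assumes const_computable: "\<And>c. computable (\<lambda>_. c)"
    and f_computable: "computable f"
    and f_nonneg: "\<And>s. f s \<ge> 0"
    and i: "(\<forall>\<theta>. 0 < \<theta> \<and> \<theta> < 1 \<longrightarrow> reach_prob K s0 (f -` {0..\<theta>}) \<le> \<theta>)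
            \<or> (\<forall>s. reach_prob K s A \<le> f s)"
    and ii: "\<And>\<theta>. 0 < \<theta> \<Longrightarrow> \<theta> < 1 \<Longrightarrow> finite ({s. f s \<ge> \<theta>} \<inter> post_star K {s0})"
  shows "divergent computable K s0 A"
  using i
proof
  assume "\<forall>\<theta>. 0 < \<theta> \<and> \<theta> < 1 \<longrightarrow> reach_prob K s0 (f -` {0..\<theta>}) \<le> \<theta>"
  then show ?thesis
    by (intro divergent_if_level_sets_unlikely[OF f_computable const_computable[of 1] f_nonneg] ii) auto
next
  assume "\<forall>s. reach_prob K s A \<le> f s"
  then show ?thesis
    by (intro divergent_if_bounds_reach_prob[OF const_computable[of 1] f_computable f_nonneg] ii) auto
qed

end
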